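(* Let $G$ be an NC-spectrum graph with nodes $x_0,\dots,x_k,y_k,\dots,y_0$, and let $M$, $\mathrm{lce}$ and $\mathrm{dia}$ be as defined in the context. Given the values $\mathrm{lce}(z)$ and $\mathrm{dia}(z)$ for all nodes $z$ (each accessible in $O(1)$ time), any entry $M(i,j)$, $0\le i,j\le k$, can be computed in $O(1)$ time.
   Context: Fix a finite set $\mathcal{R}$ of positive reals (the amino acid masses). A real $m$ is an amino-acid mass sum if $m=r_1+\cdots+r_t$ for some $t\ge1$, $r_i\in\mathcal{R}$ (repetitions allowed). Given a peptide mass $W$ and $k$ ion masses $w_1,\dots,w_k$, the NC-spectrum graph $G=(V,E)$ has vertex set $V=\{N_0,\dots,N_k,C_0,\dots,C_k\}$ with coordinates $\mathrm{cord}(N_0)=0$, $\mathrm{cord}(C_0)=W-18$, $\mathrm{cord}(N_j)=w_j-1$, $\mathrm{cord}(C_j)=W-w_j$ ($1\le j\le k$); for $j\ge1$, $N_j,C_j$ are derived from the $j$-th ion. There is an edge from $u$ to $v$ ($E(u,v)=1$, else $0$) iff $u,v$ are not derived from the same ion, $\mathrm{cord}(u)<\mathrm{cord}(v)$, and $\mathrm{cord}(v)-\mathrm{cord}(u)$ is an amino-acid mass sum. The nodes are listed in increasing coordinate order as $x_0,\dots,x_k,y_k,\dots,y_0$, with $x_0=N_0$, $y_0=C_0$ and $\{x_j,y_j\}$ the pair derived from one ion ($j\ge1$); every edge goes from a node to a later node in this list. The table $M$: for $0\le i,j\le k$, $M(i,j)=1$ if there exist a directed path $L$ from $x_0$ to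 $x_i$ and a directed path $R$ from $y_j$ to $y_0$ (a path may be a single node) such that $L\cup R$ contains exactly one of $x_p$ and $y_p$ for every $1\le p\le\max(i,j)$, and $M(i,j)=0$ otherwise. For $0\le i\le k$: $\mathrm{lce}(x_i)=j-i$ where $j\ge i$ is the largest index with $E(x_i,x_{i+1})=\dots=E(x_{j-1},x_j)=1$ (so $j=k$ or $E(x_j,x_{j+1})=0$); $\mathrm{lce}(y_i)=i-j$ where $j\le i$ is the smallest index with $E(y_i,y_{i-1})=\dots=E(y_{j+1},y_j)=1$ (so $j=0$ or $E(y_j,y_{j-1})=0$). Also $\mathrm{dia}(x_j)=M(j,j-1)$ and $\mathrm{dia}(y_j)=M(j-1,j)$ for $0<j\le k$, and $\mathrm{dia}(x_0)=\mathrm{dia}(y_0)=1$. *)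

theory Defs
  imports Complex_Main
begin

datatype node = N nat | C nat

text \<open>Amino-acid mass sum: a nonempty finite sum of elements of Rm (repetitions allowed).\<close>
definition aa_sum :: "real set \<Rightarrow> real \<Rightarrow> bool" where
  "aa_sum Rm m \<longleftrightarrow> (\<exists>rs. rs \<noteq> [] \<and> set rs \<subseteq> Rm \<and> m = sum_list rs)"

text \<open>Coordinates, for peptide mass W and ion masses w 1, ..., w k.\<close>
fun cord :: "real \<Rightarrow> (nat \<Rightarrow> real) \<Rightarrow> node \<Rightarrow> real" where
  "cord W w (N j) = (if j = 0 then 0 else w j - 1)"
| "cord W w (C j) = (if j = 0 then W - 18 else W - w j)"

definition Vset :: "nat \<Rightarrow> node set" where
  "Vset k = {N j | j. j \<le> k} \<union> {C j | j. j \<le> k}"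

text \<open>u and v are derived from the same ion (ions are numbered 1..k).\<close>
definition same_ion :: "node \<Rightarrow> node \<Rightarrow> bool" where
  "same_ion u v \<longleftrightarrow> (\<exists>j\<ge>1. u \<in> {N j, C j} \<and> v \<in> {N j, C j})"

definition NCedge :: "real set \<Rightarrow> real \<Rightarrow> (nat \<Rightarrow> real) \<Rightarrow> nat \<Rightarrow> node \<Rightarrow> node \<Rightarrow> bool" where
  "NCedge Rm W w k u v \<longleftrightarrow> u \<in> Vset k \<and> v \<in> Vset k \<and> \<not> same_ion u v
     \<and> cord W w u < cord W w v \<and> aa_sum Rm (cord W w v - cord W w u)"

definition is_path :: "(node \<Rightarrow> node \<Rightarrow> bool) \<Rightarrow> node \<Rightarrow> node \<Rightarrow> node list \<Rightarrow> bool" where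
  "is_path E u v ps \<longleftrightarrow> ps \<noteq> [] \<and> hd ps = u \<and> last ps = v
     \<and> (\<forall>t. Suc t < length ps \<longrightarrow> E (ps ! t) (ps ! Suc t))"

definition NC_listing :: "real \<Rightarrow> (nat \<Rightarrow> real) \<Rightarrow> nat \<Rightarrow> (nat \<Rightarrow> node) \<Rightarrow> (nat \<Rightarrow> node) \<Rightarrow> bool" where
  "NC_listing W w k x y \<longleftrightarrow>
     x 0 = N 0 \<and> y 0 = C 0 \<and>
     (\<exists>\<sigma>. bij_betw \<sigma> {1..k} {1..k} \<and>
        (\<forall>j\<in>{1..k}. (x j = N (\<sigma> j) \<and> y j = C (\<sigma> j)) \<or> (x j = C (\<sigma> j) \<and> y j = N (\<sigma> j)))) \<and>
     (\<forall>i<k. cord W w (x i) < cord W w (x (Suc i))) \<and>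
     cord W w (x k) < cord W w (y k) \<and>
     (\<forall>i<k. cord W w (y (Suc i)) < cord W w (y i))"

definition Mtab :: "(node \<Rightarrow> node \<Rightarrow> bool) \<Rightarrow> (nat \<Rightarrow> node) \<Rightarrow> (nat \<Rightarrow> node) \<Rightarrow> nat \<Rightarrow> nat \<Rightarrow> bool" where
  "Mtab E x y i j \<longleftrightarrow> (\<exists>L R. is_path E (x 0) (x i) L \<and> is_path E (y j) (y 0) R \<and>
     (\<forall>p\<in>{1..max i j}. (x p \<in> set L \<union> set R) \<noteq> (y p \<in> set L \<union> set R)))"

definition lce_x :: "(node \<Rightarrow> node \<Rightarrow> bool) \<Rightarrow> (nat \<Rightarrow> node) \<Rightarrow> nat \<Rightarrow> nat \<Rightarrow> nat" where
  "lce_x E x k i = (GREATEST j. i \<le> j \<and> j \<le> k \<and> (\<forall>t. i \<le> t \<and> t < j \<longrightarrow> E (x t) (x (Suc t)))) - i"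

definition lce_y :: "(node \<Rightarrow> node \<Rightarrow> bool) \<Rightarrow> (nat \<Rightarrow> node) \<Rightarrow> nat \<Rightarrow> nat" where
  "lce_y E y i = i - (LEAST j. j \<le> i \<and> (\<forall>t. j \<le> t \<and> t < i \<longrightarrow> E (y (Suc t)) (y t)))"

definition dia_x :: "(node \<Rightarrow> node \<Rightarrow> bool) \<Rightarrow> (nat \<Rightarrow> node) \<Rightarrow> (nat \<Rightarrow> node) \<Rightarrow> nat \<Rightarrow> bool" where
  "dia_x E x y j = (if j = 0 then True else Mtab E x y j (j - 1))"

definition dia_y :: "(node \<Rightarrow> node \<Rightarrow> bool) \<Rightarrow> (nat \<Rightarrow> node) \<Rightarrow> (nat \<Rightarrow> node) \<Rightarrow> nat \<Rightarrow> bool" where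
  "dia_y E x y j = (if j = 0 then True else Mtab E x y (j - 1) j)"

end

theory Submission
  imports Defs
begin

text \<open>
  Edges strictly increase the coordinate, so a path from x_0 to x_i visits only nodes up
  to x_i, hence no y's, and a path from y_j to y_0 visits no x's. For j < i the nodes
  x_p with j < p \<le> i can therefore only be covered by the left path; as no node lies
  strictly between consecutive x's, that path must run through the chain of edges
  x_(j+1) \<rightarrow> \<dots> \<rightarrow> x_i, and cutting it at x_(j+1) leaves a witness for M(j+1, j).
  Conversely such a witness extends along the chain. This gives
  M(i, j) = dia(x_(j+1)) \<and> i - (j+1) \<le> lce(x_(j+1)); the case i < j is the mirror image
  (reverse all edges and negate coordinates), and M(i, i) fails for i > 0 because
  x_i and y_i are both endpoints of the paths.
\<close>

lemma is_path_iff_successively: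
  "is_path E u v ps \<longleftrightarrow> ps \<noteq> [] \<and> hd ps = u \<and> last ps = v \<and> successively E ps"
  unfolding is_path_def successively_conv_nth by blast

lemma is_path_rev: "is_path (\<lambda>a b. E b a) v u (rev ps) \<longleftrightarrow> is_path E u v ps"
  by (auto simp: is_path_iff_successively hd_rev last_rev)

lemma is_path_append:
  assumes "is_path E u v ps" "is_path E v w qs"
  shows "is_path E u w (ps @ tl qs)"
proof -
  obtain qs' where qs: "qs = v # qs'"
    using assms(2) by (metis is_path_iff_successively list.collapse)
  show ?thesis
    using assms unfolding qs
    by (cases qs') (auto simp: is_path_iff_successively successively_append_iff)
qed

lemma is_path_upt:
  assumes "a \<le> b" "\<And>t. a \<le> t \<Longrightarrow> t < b \<Longrightarrow> E (f t) (f (Suc t))"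
  shows "is_path E (f a) (f b) (map f [a..<Suc b])"
  using assms unfolding is_path_def by (auto simp del: upt_Suc simp: hd_map last_map)

lemma is_path_sorted:
  assumes "is_path E u v ps" "\<And>a b. E a b \<Longrightarrow> c a < (c b :: 'b :: linorder)"
  shows "sorted_wrt (\<lambda>a b. c a < c b) ps"
proof -
  have "successively (\<lambda>a b. c a < c b) ps"
    using assms by (auto simp: is_path_iff_successively elim: successively_mono)
  then show ?thesis
    by (subst (asm) successively_conv_sorted_wrt) (auto intro: transpI)
qed

lemma is_path_coord_bounds:
  assumes "is_path E u v ps" "\<And>a b. E a b \<Longrightarrow> c a < (c b :: 'b :: linorder)" "z \<in> set ps"
  shows "c u \<le> c z" "c z \<le> c v"
proof -
  have sorted: "sorted_wrt (\<lambda>a b. c a < c b) ps" by (rule is_path_sorted[OF assms(1,2)])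
  have "ps = u # tl ps" "ps = butlast ps @ [v]"
    using assms(1) by (auto simp: is_path_def)
  then have "sorted_wrt (\<lambda>a b. c a < c b) (u # tl ps)"
    and "sorted_wrt (\<lambda>a b. c a < c b) (butlast ps @ [v])"
    and "z \<in> set (u # tl ps)" "z \<in> set (butlast ps @ [v])"
    using sorted assms(3) by simp_all
  then show "c u \<le> c z" "c z \<le> c v"
    by (auto simp: sorted_wrt_append less_imp_le)
qed

lemma set_take_Suc_sorted_wrt:
  assumes "sorted_wrt (\<lambda>a b. c a < (c b :: 'b :: linorder)) ps" "t < length ps"
  shows "set (take (Suc t) ps) = {z \<in> set ps. c z \<le> c (ps ! t)}"
proof safe
  fix z assume "z \<in> set (take (Suc t) ps)"
  then obtain s where s: "s \<le> t" "ps ! s = z"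
    using assms(2) by (auto simp: in_set_conv_nth less_Suc_eq_le)
  show "c z \<le> c (ps ! t)"
  proof (cases "s = t")
    case False
    then show ?thesis using sorted_wrt_nth_less[OF assms(1) _ assms(2), of s] s by simp
  qed (use s in simp)
next
  fix z assume "z \<in> set ps" "c z \<le> c (ps ! t)"
  then obtain s where s: "s < length ps" "ps ! s = z" and le: "c (ps ! s) \<le> c (ps ! t)"
    by (auto simp: in_set_conv_nth)
  have "s \<le> t"
  proof (rule ccontr)
    assume "\<not> s \<le> t"
    then have "c (ps ! t) < c (ps ! s)" using sorted_wrt_nth_less[OF assms(1), of t s] s by simp
    then show False using le by simp
  qed
  then have "take (Suc t) ps ! s = z" "s < length (take (Suc t) ps)" using s by auto
  then show "z \<in> set (take (Suc t) ps)" by (metis nth_mem)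
qed (rule in_set_takeD)

lemma is_path_prefix:
  assumes "is_path E u v ps" "\<And>a b. E a b \<Longrightarrow> c a < (c b :: 'b :: linorder)" "w \<in> set ps"
  obtains ps' where "is_path E u w ps'" "set ps' = {z \<in> set ps. c z \<le> c w}"
proof -
  obtain t where t: "t < length ps" "ps ! t = w"
    using assms(3) by (auto simp: in_set_conv_nth)
  have "successively E (take (Suc t) ps)"
    using assms(1) successively_append_iff[of E "take (Suc t) ps" "drop (Suc t) ps"]
    by (simp add: is_path_iff_successively)
  moreover have "last (take (Suc t) ps) = w"
    using t by (simp add: take_Suc_conv_app_nth)
  ultimately have "is_path E u w (take (Suc t) ps)"
    using assms(1) t by (auto simp: is_path_iff_successively hd_take)
  moreover have "set (take (Suc t) ps) = {z \<in> set ps. c z \<le> c w}"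
    using set_take_Suc_sorted_wrt[OF is_path_sorted[OF assms(1,2)] t(1)] t(2) by simp
  ultimately show ?thesis by (rule that)
qed

lemma is_path_edge_if_adjacent:
  assumes "is_path E u v ps" "\<And>a b. E a b \<Longrightarrow> c a < (c b :: 'b :: linorder)"
    and "a \<in> set ps" "b \<in> set ps" "c a < c b"
    and "\<And>z. z \<in> set ps \<Longrightarrow> \<not> (c a < c z \<and> c z < c b)"
  shows "E a b"
proof -
  have sorted: "sorted_wrt (\<lambda>a b. c a < c b) ps" by (rule is_path_sorted[OF assms(1,2)])
  obtain s t where s: "s < length ps" "ps ! s = a" and t: "t < length ps" "ps ! t = b"
    using assms(3,4) by (auto simp: in_set_conv_nth)
  have "s < t"
    using sorted_wrt_nth_less[OF sorted, of t s] s t assms(5) by (metis less_asym linorder_neqE_nat)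
  moreover have "\<not> Suc s < t"
    using sorted_wrt_nth_less[OF sorted, of s "Suc s"] sorted_wrt_nth_less[OF sorted, of "Suc s" t]
      assms(6)[of "ps ! Suc s"] s t by auto
  ultimately have "t = Suc s" by simp
  then show ?thesis
    using assms(1) s t by (auto simp: is_path_def)
qed

lemma is_path_set_subset:
  assumes "is_path E u v ps" "u \<in> V" "\<And>a b. E a b \<Longrightarrow> b \<in> V"
  shows "set ps \<subseteq> V"
proof
  fix z assume "z \<in> set ps"
  then obtain s where s: "s < length ps" "ps ! s = z" by (auto simp: in_set_conv_nth)
  show "z \<in> V"
  proof (cases s)
    case 0
    then show ?thesis using assms(1,2) s by (auto simp: is_path_def hd_conv_nth)
  next
    case (Suc r)
    then have "E (ps ! r) z" using assms(1) s by (auto simp: is_path_def)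
    then show ?thesis by (rule assms(3))
  qed
qed

lemma is_path_ends: "is_path E u v ps \<Longrightarrow> u \<in> set ps \<and> v \<in> set ps"
  unfolding is_path_def by auto

lemma Mtab_diagonal: "Mtab E x y i i \<longleftrightarrow> i = 0"
proof
  assume "Mtab E x y i i"
  then obtain L R where L: "is_path E (x 0) (x i) L" and R: "is_path E (y i) (y 0) R"
    and sep: "\<forall>p\<in>{1..i}. (x p \<in> set L \<union> set R) \<noteq> (y p \<in> set L \<union> set R)"
    unfolding Mtab_def by auto
  show "i = 0"
  proof (rule ccontr)
    assume "i \<noteq> 0"
    then have "i \<in> {1..i}" by simp
    then show False using sep is_path_ends[OF L] is_path_ends[OF R] by blast
  qed
next
  assume "i = 0"
  moreover have "is_path E (x 0) (x 0) [x 0]" "is_path E (y 0) (y 0) [y 0]"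
    by (auto simp: is_path_def)
  ultimately show "Mtab E x y i i" unfolding Mtab_def by auto
qed

lemma Mtab_mirror: "Mtab (\<lambda>a b. E b a) y x j i \<longleftrightarrow> Mtab E x y i j"
proof -
  have "Mtab E x y i j" if "Mtab (\<lambda>a b. E b a) y x j i" for E x y i j
  proof -
    from that obtain L R where "is_path (\<lambda>a b. E b a) (y 0) (y j) L"
      and "is_path (\<lambda>a b. E b a) (x i) (x 0) R"
      and "\<forall>p\<in>{1..max j i}. (y p \<in> set L \<union> set R) \<noteq> (x p \<in> set L \<union> set R)"
      unfolding Mtab_def by blast
    then show ?thesis
      unfolding Mtab_def
      by (intro exI[of _ "rev R"] exI[of _ "rev L"])
        (auto simp: is_path_rev[of E, symmetric] max.commute)
  qed
  from this[of E y x j i] this[of "\<lambda>a b. E b a" x y i j] show ?thesis by auto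
qed

lemma le_lce_x_iff:
  assumes "a \<le> i" "i \<le> k"
  shows "i - a \<le> lce_x E x k a \<longleftrightarrow> (\<forall>t. a \<le> t \<longrightarrow> t < i \<longrightarrow> E (x t) (x (Suc t)))"
proof -
  define P where
    "P g \<longleftrightarrow> a \<le> g \<and> g \<le> k \<and> (\<forall>t. a \<le> t \<and> t < g \<longrightarrow> E (x t) (x (Suc t)))" for g
  define m where "m = Greatest P"
  have lce: "lce_x E x k a = m - a" unfolding lce_x_def P_def m_def by simp
  have bounded: "\<forall>g. P g \<longrightarrow> g \<le> k" unfolding P_def by auto
  have "P a" using assms unfolding P_def by auto
  then have "P m" unfolding m_def using GreatestI_nat bounded by blast
  then have ge: "a \<le> m" and chain: "\<forall>t. a \<le> t \<and> t < m \<longrightarrow> E (x t) (x (Suc t))"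
    unfolding P_def by simp_all
  show ?thesis
  proof
    assume "i - a \<le> lce_x E x k a"
    then have "i \<le> m" using lce assms(1) ge by linarith
    then show "\<forall>t. a \<le> t \<longrightarrow> t < i \<longrightarrow> E (x t) (x (Suc t))" using chain by simp
  next
    assume "\<forall>t. a \<le> t \<longrightarrow> t < i \<longrightarrow> E (x t) (x (Suc t))"
    then have "P i" using assms unfolding P_def by auto
    then have "i \<le> m" unfolding m_def using Greatest_le_nat bounded by blast
    then show "i - a \<le> lce_x E x k a" using lce by simp
  qed
qed

lemma le_lce_y_iff:
  assumes "b \<le> j"
  shows "j - b \<le> lce_y E y j \<longleftrightarrow> (\<forall>t. b \<le> t \<longrightarrow> t < j \<longrightarrow> E (y (Suc t)) (y t))"
proof -
  define P where "P m \<longleftrightarrow> m \<le> j \<and> (\<forall>t. m \<le> t \<and> t < j \<longrightarrow> E (y (Suc t)) (y t))" for m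
  define m where "m = Least P"
  have lce: "lce_y E y j = j - m" unfolding lce_y_def P_def m_def by simp
  have "P j" unfolding P_def by auto
  then have "P m" unfolding m_def by (rule LeastI)
  then have le: "m \<le> j" and chain: "\<forall>t. m \<le> t \<and> t < j \<longrightarrow> E (y (Suc t)) (y t)"
    unfolding P_def by simp_all
  show ?thesis
  proof
    assume "j - b \<le> lce_y E y j"
    then have "m \<le> b" using lce assms le by linarith
    then show "\<forall>t. b \<le> t \<longrightarrow> t < j \<longrightarrow> E (y (Suc t)) (y t)" using chain by simp
  next
    assume "\<forall>t. b \<le> t \<longrightarrow> t < j \<longrightarrow> E (y (Suc t)) (y t)"
    then have "P b" using assms unfolding P_def by auto
    then have "m \<le> b" unfolding m_def by (rule Least_le)
    then show "j - b \<le> lce_y E y j" using lce by simp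
  qed
qed

text \<open>
  They survive reversing the
  edges, negating the coordinate and swapping x with y (lemma mirror), which reduces the
  case i < j to the case j < i.
\<close>
locale nc_graph =
  fixes E :: "node \<Rightarrow> node \<Rightarrow> bool" and c :: "node \<Rightarrow> real"
    and x y :: "nat \<Rightarrow> node" and k :: nat
  assumes edge_increasing: "E a b \<Longrightarrow> c a < c b"
    and edge_listed: "E a b \<Longrightarrow> {a, b} \<subseteq> x ` {..k} \<union> y ` {..k}"
    and x_increasing: "p < q \<Longrightarrow> q \<le> k \<Longrightarrow> c (x p) < c (x q)"
    and y_decreasing: "p < q \<Longrightarrow> q \<le> k \<Longrightarrow> c (y q) < c (y p)"
    and x_below_y: "c (x k) < c (y k)"
begin

lemma mirror: "nc_graph (\<lambda>a b. E b a) (\<lambda>v. - c v) y x k"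
proof unfold_locales
  fix a b assume "E b a"
  then show "- c a < - c b" using edge_increasing by simp
  show "{a, b} \<subseteq> y ` {..k} \<union> x ` {..k}" using edge_listed[OF \<open>E b a\<close>] by blast
qed (use x_increasing y_decreasing x_below_y in auto)

lemma x_le_x: "p \<le> q \<Longrightarrow> q \<le> k \<Longrightarrow> c (x p) \<le> c (x q)"
  using x_increasing[of p q] by (cases "p = q") auto

lemma y_le_y: "p \<le> q \<Longrightarrow> q \<le> k \<Longrightarrow> c (y q) \<le> c (y p)"
  using y_decreasing[of p q] by (cases "p = q") auto

lemma x_less_y: "p \<le> k \<Longrightarrow> q \<le> k \<Longrightarrow> c (x p) < c (y q)"
  using x_le_x[of p k] y_le_y[of q k] x_below_y by simp

lemma x_eq_x_iff: "p \<le> k \<Longrightarrow> q \<le> k \<Longrightarrow> x p = x q \<longleftrightarrow> p = q"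
  using x_increasing by (metis less_irrefl linorder_neqE_nat)

lemma no_node_between_x:
  assumes "t < k" "z \<in> x ` {..k} \<union> y ` {..k}"
  shows "\<not> (c (x t) < c z \<and> c z < c (x (Suc t)))"
proof
  assume between: "c (x t) < c z \<and> c z < c (x (Suc t))"
  from assms(2) consider m where "m \<le> k" "z = x m" | m where "m \<le> k" "z = y m" by blast
  then show False
  proof cases
    case (1 m)
    then show False
      using between x_le_x[of m t] x_le_x[of "Suc t" m] assms(1) by (cases "m \<le> t") auto
  next
    case (2 m)
    then show False using between x_less_y[of "Suc t" m] assms(1) by auto
  qed
qed

lemma path_from_x0_listed:
  assumes "is_path E (x 0) v L"
  shows "set L \<subseteq> x ` {..k} \<union> y ` {..k}"
  using is_path_set_subset[OF assms] edge_listed by blast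

lemma y_notin_path_from_x0: "is_path E (x 0) (x i) L \<Longrightarrow> i \<le> k \<Longrightarrow> p \<le> k \<Longrightarrow> y p \<notin> set L"
  using is_path_coord_bounds(2)[OF _ edge_increasing] x_less_y by fastforce

lemma x_notin_path_to_y0: "is_path E (y j) (y 0) R \<Longrightarrow> j \<le> k \<Longrightarrow> p \<le> k \<Longrightarrow> x p \<notin> set R"
  using is_path_coord_bounds(1)[OF _ edge_increasing] x_less_y by fastforce

lemma y_notin_path_to_y0: "is_path E (y j) (y 0) R \<Longrightarrow> j < p \<Longrightarrow> p \<le> k \<Longrightarrow> y p \<notin> set R"
  using is_path_coord_bounds(1)[OF _ edge_increasing] y_decreasing by fastforce

lemma Mtab_iff_sides:
  assumes "i \<le> k" "j \<le> k"
  shows "Mtab E x y i j \<longleftrightarrow> (\<exists>L R. is_path E (x 0) (x i) L \<and> is_path E (y j) (y 0) R \<and>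
    (\<forall>p\<in>{1..max i j}. (x p \<in> set L) \<noteq> (y p \<in> set R)))"
proof -
  have "(x p \<in> set L \<union> set R \<longleftrightarrow> x p \<in> set L) \<and> (y p \<in> set L \<union> set R \<longleftrightarrow> y p \<in> set R)"
    if "is_path E (x 0) (x i) L" "is_path E (y j) (y 0) R" "p \<in> {1..max i j}" for L R p
    using that assms y_notin_path_from_x0 x_notin_path_to_y0 by auto
  then show ?thesis unfolding Mtab_def by (metis (no_types, lifting))
qed

lemma Mtab_below_diagonalD:
  assumes "j < i" "i \<le> k" "Mtab E x y i j"
  shows "Mtab E x y (Suc j) j" and "\<forall>t. Suc j \<le> t \<longrightarrow> t < i \<longrightarrow> E (x t) (x (Suc t))"
proof -
  have j: "j \<le> k" "Suc j \<le> k" using assms(1,2) by simp_all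
  obtain L R where L: "is_path E (x 0) (x i) L" and R: "is_path E (y j) (y 0) R"
    and sep: "\<forall>p\<in>{1..i}. (x p \<in> set L) \<noteq> (y p \<in> set R)"
    using assms Mtab_iff_sides[OF assms(2) j(1)] by (auto simp: max_def)
  have on_L: "x p \<in> set L" if "Suc j \<le> p" "p \<le> i" for p
    using sep y_notin_path_to_y0[OF R, of p] that assms(2) by auto
  show "\<forall>t. Suc j \<le> t \<longrightarrow> t < i \<longrightarrow> E (x t) (x (Suc t))"
  proof (intro allI impI)
    fix t assume t: "Suc j \<le> t" "t < i"
    show "E (x t) (x (Suc t))"
    proof (rule is_path_edge_if_adjacent[OF L edge_increasing])
      show "x t \<in> set L" "x (Suc t) \<in> set L" using on_L t by auto
      show "c (x t) < c (x (Suc t))" using x_increasing t assms(2) by simp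
      show "\<not> (c (x t) < c z \<and> c z < c (x (Suc t)))" if "z \<in> set L" for z
        using no_node_between_x path_from_x0_listed[OF L] that t assms(2) by auto
    qed
  qed
  obtain L' where L': "is_path E (x 0) (x (Suc j)) L'"
    and set_L': "set L' = {z \<in> set L. c z \<le> c (x (Suc j))}"
    using is_path_prefix[where c = c, OF L edge_increasing on_L[of "Suc j"]] assms(1) by auto
  show "Mtab E x y (Suc j) j"
    unfolding Mtab_iff_sides[OF j(2,1)]
  proof (rule exI[of _ L'], rule exI[of _ R], intro conjI ballI)
    fix p assume p: "p \<in> {1..max (Suc j) j}"
    then have "x p \<in> set L' \<longleftrightarrow> x p \<in> set L" using set_L' x_le_x j by auto
    then show "(x p \<in> set L') \<noteq> (y p \<in> set R)" using sep p assms(1) by auto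
  qed (fact L' R)+
qed

lemma Mtab_below_diagonalI:
  assumes "j < i" "i \<le> k" "Mtab E x y (Suc j) j"
    and chain: "\<And>t. Suc j \<le> t \<Longrightarrow> t < i \<Longrightarrow> E (x t) (x (Suc t))"
  shows "Mtab E x y i j"
proof -
  have j: "j \<le> k" "Suc j \<le> k" using assms(1,2) by simp_all
  obtain L' R where L': "is_path E (x 0) (x (Suc j)) L'" and R: "is_path E (y j) (y 0) R"
    and sep: "\<forall>p\<in>{1..Suc j}. (x p \<in> set L') \<noteq> (y p \<in> set R)"
    using assms(3) Mtab_iff_sides[OF j(2,1)] by auto
  define L where "L = L' @ map x [Suc (Suc j)..<Suc i]"
  have L: "is_path E (x 0) (x i) L"
    using is_path_append[OF L' is_path_upt[of "Suc j" i E x]] assms(1) chain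
    unfolding L_def by (simp del: upt_Suc add: map_tl[symmetric])
  have set_L: "set L = set L' \<union> x ` {Suc (Suc j)..i}" unfolding L_def by auto
  show ?thesis
    unfolding Mtab_iff_sides[OF assms(2) j(1)]
  proof (rule exI[of _ L], rule exI[of _ R], intro conjI ballI)
    fix p assume p: "p \<in> {1..max i j}"
    show "(x p \<in> set L) \<noteq> (y p \<in> set R)"
    proof (cases "p \<le> Suc j")
      case True
      then have "x p \<in> set L \<longleftrightarrow> x p \<in> set L'" using set_L x_eq_x_iff assms(2) p by auto
      then show ?thesis using sep True p by auto
    next
      case False
      then show ?thesis using set_L y_notin_path_to_y0[OF R, of p] p assms(1,2) by auto
    qed
  qed (fact L R)+
qed

lemma Mtab_below_diagonal_iff:
  assumes "j < i" "i \<le> k"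
  shows "Mtab E x y i j \<longleftrightarrow>
    Mtab E x y (Suc j) j \<and> (\<forall>t. Suc j \<le> t \<longrightarrow> t < i \<longrightarrow> E (x t) (x (Suc t)))"
  using Mtab_below_diagonalD[OF assms] Mtab_below_diagonalI[OF assms] by blast

end

lemma Vset_subset_listing:
  assumes "NC_listing W w k x y"
  shows "Vset k \<subseteq> x ` {..k} \<union> y ` {..k}"
proof
  fix v assume "v \<in> Vset k"
  then obtain m where m: "m \<le> k" "v = N m \<or> v = C m" unfolding Vset_def by auto
  obtain \<sigma> where x0: "x 0 = N 0" and y0: "y 0 = C 0" and \<sigma>: "bij_betw \<sigma> {1..k} {1..k}"
    and pair: "\<forall>j\<in>{1..k}. (x j = N (\<sigma> j) \<and> y j = C (\<sigma> j)) \<or> (x j = C (\<sigma> j) \<and> y j = N (\<sigma> j))"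
    using assms unfolding NC_listing_def by blast
  obtain q where "q \<le> k" "v = x q \<or> v = y q"
  proof (cases "m = 0")
    case True
    then show ?thesis using that[of 0] m x0 y0 by auto
  next
    case False
    then have "m \<in> \<sigma> ` {1..k}" using bij_betw_imp_surj_on[OF \<sigma>] m by auto
    then obtain q where q: "q \<in> {1..k}" "\<sigma> q = m" by blast
    then have "x q = N m \<and> y q = C m \<or> x q = C m \<and> y q = N m" using pair by auto
    then show ?thesis using that[of q] q m by auto
  qed
  then show "v \<in> x ` {..k} \<union> y ` {..k}" by auto
qed

lemma nc_graph_NCedge:
  assumes "NC_listing W w k x y"
  shows "nc_graph (NCedge Rm W w k) (cord W w) x y k"
proof unfold_locales
  fix a b assume "NCedge Rm W w k a b"
  then show "cord W w a < cord W w b" "{a, b} \<subseteq> x ` {..k} \<union> y ` {..k}"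
    using Vset_subset_listing[OF assms] unfolding NCedge_def by auto
next
  fix p q assume "p < q" "q \<le> k"
  then have "{p..<q} \<subseteq> {..<k}" by auto
  moreover have "cord W w (x n) < cord W w (x (Suc n))" "- cord W w (y n) < - cord W w (y (Suc n))"
    if "n \<in> {..<k}" for n
    using assms that unfolding NC_listing_def by auto
  ultimately show "cord W w (x p) < cord W w (x q)" and "cord W w (y q) < cord W w (y p)"
    using lift_Suc_mono_less_ivl[of "{..<k}" "\<lambda>p. cord W w (x p)" p q]
      lift_Suc_mono_less_ivl[of "{..<k}" "\<lambda>p. - cord W w (y p)" p q] \<open>p < q\<close>
    by auto
next
  show "cord W w (x k) < cord W w (y k)" using assms unfolding NC_listing_def by blast
qed

theorem lemma3:
  fixes Rm :: "real set" and W :: real and w :: "nat \<Rightarrow> real" and k :: nat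
    and x y :: "nat \<Rightarrow> node"
  assumes "finite Rm" and "\<forall>r\<in>Rm. r > 0"
    and "NC_listing W w k x y"
    and "E = NCedge Rm W w k"
    and "i \<le> k" and "j \<le> k"
  shows "Mtab E x y i j =
     (if i = j then i = 0
      else if j < i then dia_x E x y (Suc j) \<and> i - Suc j \<le> lce_x E x k (Suc j)
      else dia_y E x y (Suc i) \<and> j - Suc i \<le> lce_y E y j)"
proof -
  interpret nc_graph E "cord W w" x y k
    using nc_graph_NCedge[OF assms(3)] assms(4) by simp
  consider "i = j" | "j < i" | "i < j" by linarith
  then show ?thesis
  proof cases
    case 1
    then show ?thesis by (simp add: Mtab_diagonal)
  next
    case 2
    then show ?thesis
      using Mtab_below_diagonal_iff[OF 2 assms(5)] le_lce_x_iff[of "Suc j" i k E x] assms(5)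
      by (simp add: dia_x_def)
  next
    case 3
    have "Mtab E x y i j \<longleftrightarrow> Mtab (\<lambda>a b. E b a) y x j i" by (rule Mtab_mirror[symmetric])
    also have "\<dots> \<longleftrightarrow>
        Mtab (\<lambda>a b. E b a) y x (Suc i) i \<and> (\<forall>t. Suc i \<le> t \<longrightarrow> t < j \<longrightarrow> E (y (Suc t)) (y t))"
      by (rule nc_graph.Mtab_below_diagonal_iff[OF mirror 3 assms(6)])
    also have "\<dots> \<longleftrightarrow> dia_y E x y (Suc i) \<and> j - Suc i \<le> lce_y E y j"
      using Mtab_mirror[of E y x "Suc i" i] le_lce_y_iff[of "Suc i" j E y] 3
      by (simp add: dia_y_def)
    finally show ?thesis using 3 by simp
  qed
qed

end
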